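(* Let $K\ge2$ and let $(\mathbf{H},D,\mathbf{Z})$ follow the replication csmGmm (r-csmGmm) described in the context. Let $\mathcal{H}^{rep}_a=\{(1,\dots,1)^T,(-1,\dots,-1)^T\}\subset\{-1,0,1\}^K$ and $\mathcal{H}^{rep}_0=\{-1,0,1\}^K\setminus\mathcal{H}^{rep}_a$, and define $$lfdr(\mathbf{z})=\Pr(\mathbf{H}\in\mathcal{H}^{rep}_0\mid\mathbf{Z}=\mathbf{z})=\frac{\sum_{l:\mathbf{h}^l\in\mathcal{H}^{rep}_0}\sum_{m=1}^{M_{b_l}}\pi_{b_l m}\prod_{k=1}^K\phi(z_k-h^l_k\mu_{b_l,m,k})}{\sum_{l=0}^{3^K-1}\sum_{m=1}^{M_{b_l}}\pi_{b_l m}\prod_{k=1}^K\phi(z_k-h^l_k\mu_{b_l,m,k})},$$ with $\phi$ the standard normal density. Then for any $k\in\{1,\dots,K\}$, with the other coordinates held fixed: $lfdr(\mathbf{z})$ is non-increasing in $z_k$ for $z_k>0$ provided $z_{k'}>0$ for all $k'$; and $lfdr(\mathbf{z})$ is non-decreasing in $z_k$ for $z_k<0$ provided $z_{k'}<0$ for all $k'$.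
   Context: The latent configuration is $\mathbf{H}\in\{-1,0,1\}^K$; enumerate the $3^K$ configurations as $\mathbf{h}^0,\dots,\mathbf{h}^{3^K-1}$ with $\mathbf{h}^0=(0,\dots,0)^T$, and let $b_l=\sum_{k=1}^K2^{K-k}|h^l_k|$ (the $k$-th binary digit of $b_l$ is $|h^l_k|$). csmGmm: for each $b\in\{0,\dots,2^K-1\}$ there is a positive integer $M_b$ ($M_0=1$), mean-magnitude vectors $\boldsymbol{\mu}_{b,m}=(\mu_{b,m,1},\dots,\mu_{b,m,K})^T$, $m=1,\dots,M_b$, with $\mu_{b,m,k}=0$ if the $k$-th binary digit of $b$ is $0$ and $\mu_{b,m,k}>0$ otherwise, and $\mu_{2^K-1,m,k}\ge\mu_{b,m',k}$ for all $b<2^K-1$ and all $m,m',k$; and probabilities $\Pr(\mathbf{H}=\mathbf{h}^l,D=m)=\pi_{b_l m}\ge0$ (shared across configurations with equal $b_l$) summing to one. Conditional on $\mathbf{H}=\mathbf{h}^l$, $D=m$, $\mathbf{Z}\sim N_K(\mathrm{diag}(\mathbf{h}^l)\boldsymbol{\mu}_{b_l,m},\mathbf{I}_K)$. The r-csmGmm is this model with the additional restriction $M_{2^K-1}=1$. The replication composite null for parameters $\theta_1,\dots,\theta_K$ is $\{\bigcup_k\theta_k=0\}\cup\{\bigcup_{k\ne k'}\mathrm{sign}(\theta_k)\ne\mathrm{sign}(\theta_{k'})\}$, corresponding to $\mathbf{H}\in\mathcal{H}^{rep}_0$. *)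

theory Defs
  imports "HOL-Probability.Distributions"
begin

definition configs :: "nat \<Rightarrow> (nat \<Rightarrow> int) set" where
  "configs K = {h. (\<forall>k\<in>{1..K}. h k \<in> {-1, 0, 1}) \<and> (\<forall>k. k \<notin> {1..K} \<longrightarrow> h k = 0)}"

definition bidx :: "nat \<Rightarrow> (nat \<Rightarrow> int) \<Rightarrow> nat" where
  "bidx K h = (\<Sum>k=1..K. 2 ^ (K - k) * nat \<bar>h k\<bar>)"

definition digit :: "nat \<Rightarrow> nat \<Rightarrow> nat \<Rightarrow> nat" where
  "digit K b k = (b div 2 ^ (K - k)) mod 2"

definition Ha_rep :: "nat \<Rightarrow> (nat \<Rightarrow> int) set" where
  "Ha_rep K = {(\<lambda>k. if k \<in> {1..K} then 1 else 0), (\<lambda>k. if k \<in> {1..K} then -1 else 0)}"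

definition H0_rep :: "nat \<Rightarrow> (nat \<Rightarrow> int) set" where
  "H0_rep K = configs K - Ha_rep K"

text \<open>csmGmm parameters: M b (number of components for class b),
  mu b m k (mean magnitudes), p b m (the probabilities pi_{b m}).\<close>
definition csmGmm :: "nat \<Rightarrow> (nat \<Rightarrow> nat) \<Rightarrow> (nat \<Rightarrow> nat \<Rightarrow> nat \<Rightarrow> real) \<Rightarrow> (nat \<Rightarrow> nat \<Rightarrow> real) \<Rightarrow> bool" where
  "csmGmm K M mu p \<longleftrightarrow>
     M 0 = 1 \<and>
     (\<forall>b<2^K. M b \<ge> 1) \<and>
     (\<forall>b<2^K. \<forall>m\<in>{1..M b}. \<forall>k\<in>{1..K}.
        (digit K b k = 0 \<longrightarrow> mu b m k = 0) \<and> (digit K b k \<noteq> 0 \<longrightarrow> mu b m k > 0)) \<and>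
     (\<forall>b<2^K - 1. \<forall>m\<in>{1..M (2^K - 1)}. \<forall>m'\<in>{1..M b}. \<forall>k\<in>{1..K}.
        mu (2^K - 1) m k \<ge> mu b m' k) \<and>
     (\<forall>b<2^K. \<forall>m\<in>{1..M b}. p b m \<ge> 0) \<and>
     (\<Sum>h\<in>configs K. \<Sum>m=1..M (bidx K h). p (bidx K h) m) = 1"

definition r_csmGmm :: "nat \<Rightarrow> (nat \<Rightarrow> nat) \<Rightarrow> (nat \<Rightarrow> nat \<Rightarrow> nat \<Rightarrow> real) \<Rightarrow> (nat \<Rightarrow> nat \<Rightarrow> real) \<Rightarrow> bool" where
  "r_csmGmm K M mu p \<longleftrightarrow> csmGmm K M mu p \<and> M (2^K - 1) = 1"

text \<open>Joint density term Pr(H = h) f(z | H = h), summed over D.\<close>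
definition dens :: "nat \<Rightarrow> (nat \<Rightarrow> nat) \<Rightarrow> (nat \<Rightarrow> nat \<Rightarrow> nat \<Rightarrow> real) \<Rightarrow> (nat \<Rightarrow> nat \<Rightarrow> real)
    \<Rightarrow> (nat \<Rightarrow> int) \<Rightarrow> (nat \<Rightarrow> real) \<Rightarrow> real" where
  "dens K M mu p h z = (\<Sum>m=1..M (bidx K h). p (bidx K h) m *
      (\<Prod>k=1..K. std_normal_density (z k - real_of_int (h k) * mu (bidx K h) m k)))"

definition lfdr :: "nat \<Rightarrow> (nat \<Rightarrow> nat) \<Rightarrow> (nat \<Rightarrow> nat \<Rightarrow> nat \<Rightarrow> real) \<Rightarrow> (nat \<Rightarrow> nat \<Rightarrow> real)
    \<Rightarrow> (nat \<Rightarrow> real) \<Rightarrow> real" where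
  "lfdr K M mu p z = (\<Sum>h\<in>H0_rep K. dens K M mu p h z) / (\<Sum>h\<in>configs K. dens K M mu p h z)"

end

theory Submission
  imports Defs
begin

text \<open>
  Pairing each configuration h with -h (same class, opposite mean) turns the density of Z
  given H = \<plusminus>h, divided by the N(0, I) density, into a mixture of terms w cosh\<langle>z, \<nu>\<rangle>,
  \<nu> the signed mean of a component. So lfdr = N / (N + A) for a null and an alternative
  cosh-mixture, and it suffices that cosh\<langle>z, \<nu>\<rangle> / cosh\<langle>z, \<tau>\<rangle> is non-increasing in z k > 0
  for every null mean \<nu> and the alternative mean \<tau>. Under the r-csmGmm (a single alternative
  component whose magnitudes dominate all others) \<bar>\<nu> j\<bar> \<le> \<tau> j, and then
  u \<mapsto> cosh(a + u c) / cosh(b + u d) is non-increasing on u \<ge> 0 whenever \<bar>a\<bar> \<le> b and \<bar>c\<bar> \<le> d.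
  The negative orthant follows from the symmetry lfdr(-z) = lfdr(z).
\<close>

lemma std_normal_density_diff:
  "std_normal_density (x - y) = std_normal_density x * exp (x * y - y\<^sup>2 / 2)"
proof -
  have "- (x - y)\<^sup>2 / 2 = - x\<^sup>2 / 2 + (x * y - y\<^sup>2 / 2)"
    by (simp add: power2_diff field_simps)
  then show ?thesis
    by (simp only: std_normal_density_def exp_add mult.assoc)
qed

lemma prod_std_normal_density_diff_add:
  fixes x y :: "'a \<Rightarrow> real"
  assumes "finite A"
  shows "(\<Prod>j\<in>A. std_normal_density (x j - y j)) + (\<Prod>j\<in>A. std_normal_density (x j + y j))
    = 2 * (\<Prod>j\<in>A. std_normal_density (x j)) * exp (- (\<Sum>j\<in>A. (y j)\<^sup>2) / 2)
        * cosh (\<Sum>j\<in>A. x j * y j)"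
proof -
  have shift: "(\<Prod>j\<in>A. std_normal_density (x j - y j))
      = (\<Prod>j\<in>A. std_normal_density (x j)) * exp (- (\<Sum>j\<in>A. (y j)\<^sup>2) / 2)
        * exp (\<Sum>j\<in>A. x j * y j)" for y :: "'a \<Rightarrow> real"
  proof -
    have "(\<Prod>j\<in>A. std_normal_density (x j - y j))
        = (\<Prod>j\<in>A. std_normal_density (x j)) * exp (\<Sum>j\<in>A. x j * y j - (y j)\<^sup>2 / 2)"
      using assms by (simp add: std_normal_density_diff prod.distrib exp_sum)
    also have "(\<Sum>j\<in>A. x j * y j - (y j)\<^sup>2 / 2) = - (\<Sum>j\<in>A. (y j)\<^sup>2) / 2 + (\<Sum>j\<in>A. x j * y j)"
      by (simp add: sum_subtractf sum_divide_distrib)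
    finally show ?thesis
      by (simp only: exp_add mult.assoc)
  qed
  show ?thesis
    using shift[of y] shift[of "\<lambda>j. - y j"]
    by (simp add: sum_negf cosh_def field_simps)
qed

lemma cosh_add_mult_cosh_le:
  fixes a b e f :: real
  assumes "\<bar>a\<bar> \<le> b" and "\<bar>e\<bar> \<le> f"
  shows "cosh (a + e) * cosh b \<le> cosh a * cosh (b + f)"
proof -
  have cosh_pos: "0 < cosh x" for x :: real
    by (rule cosh_real_pos)
  have "cosh e \<le> cosh f"
    using assms(2) cosh_real_nonneg_le_iff[of "\<bar>e\<bar>" f] by simp
  then have cosh_part: "cosh a * cosh b * cosh e \<le> cosh a * cosh b * cosh f"
    using cosh_pos[of a] cosh_pos[of b] by simp
  have "0 \<le> sinh (b - \<bar>a\<bar>)"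
    using assms(1) by simp
  \<comment> \<open>that is, \<open>\<bar>tanh a\<bar> \<le> tanh b\<close>\<close>
  then have tanh_le: "\<bar>sinh a\<bar> * cosh b \<le> cosh a * sinh b"
    by (simp add: sinh_diff algebra_simps)
  have sinh_e: "\<bar>sinh e\<bar> \<le> sinh f"
    using assms(2) sinh_real_le_iff[of "\<bar>e\<bar>" f] by simp
  have "sinh a * sinh e \<le> \<bar>sinh a\<bar> * \<bar>sinh e\<bar>"
    by (metis abs_ge_self abs_mult)
  then have "sinh a * sinh e * cosh b \<le> \<bar>sinh a\<bar> * cosh b * \<bar>sinh e\<bar>"
    using cosh_pos[of b] by (simp add: mult_right_mono mult_ac)
  also have "\<dots> \<le> cosh a * sinh b * sinh f"
    using cosh_pos[of a] assms by (intro mult_mono[OF tanh_le sinh_e]) auto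
  finally have sinh_part: "sinh a * sinh e * cosh b \<le> cosh a * sinh b * sinh f" .
  have "cosh (a + e) * cosh b = cosh a * cosh b * cosh e + sinh a * sinh e * cosh b"
    and "cosh a * cosh (b + f) = cosh a * cosh b * cosh f + cosh a * sinh b * sinh f"
    by (simp_all add: cosh_add algebra_simps)
  then show ?thesis
    using cosh_part sinh_part by linarith
qed

lemma cosh_mult_cosh_antimono:
  fixes a b c d s t :: real
  assumes "\<bar>a\<bar> \<le> b" and "\<bar>c\<bar> \<le> d" and "0 \<le> s" and "s \<le> t"
  shows "cosh (a + t * c) * cosh (b + s * d) \<le> cosh (a + s * c) * cosh (b + t * d)"
proof -
  have "\<bar>s * c\<bar> \<le> s * d" and "\<bar>(t - s) * c\<bar> \<le> (t - s) * d"
    using assms by (simp_all add: abs_mult mult_left_mono)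
  then have "cosh (a + s * c + (t - s) * c) * cosh (b + s * d)
      \<le> cosh (a + s * c) * cosh (b + s * d + (t - s) * d)"
    using assms(1) by (intro cosh_add_mult_cosh_le) auto
  moreover have "a + s * c + (t - s) * c = a + t * c" and "b + s * d + (t - s) * d = b + t * d"
    by (simp_all add: algebra_simps)
  ultimately show ?thesis
    by simp
qed

lemma cosh_sum_fun_upd_antimono:
  fixes z \<nu> \<tau> :: "'a \<Rightarrow> real"
  assumes "finite A" and "k \<in> A"
    and dominated: "\<And>j. j \<in> A \<Longrightarrow> \<bar>\<nu> j\<bar> \<le> \<tau> j"
    and nonneg: "\<And>j. j \<in> A - {k} \<Longrightarrow> 0 \<le> z j"
    and "0 \<le> s" and "s \<le> t"
  shows "cosh (\<Sum>j\<in>A. (z(k := t)) j * \<nu> j) * cosh (\<Sum>j\<in>A. (z(k := s)) j * \<tau> j)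
    \<le> cosh (\<Sum>j\<in>A. (z(k := s)) j * \<nu> j) * cosh (\<Sum>j\<in>A. (z(k := t)) j * \<tau> j)"
proof -
  have split: "(\<Sum>j\<in>A. (z(k := u)) j * w j) = (\<Sum>j\<in>A - {k}. z j * w j) + u * w k"
    for u :: real and w :: "'a \<Rightarrow> real"
  proof -
    have "(\<Sum>j\<in>A - {k}. (z(k := u)) j * w j) = (\<Sum>j\<in>A - {k}. z j * w j)"
      by (rule sum.cong) auto
    then show ?thesis
      using sum.remove[OF assms(1,2), of "\<lambda>j. (z(k := u)) j * w j"] by simp
  qed
  have "\<bar>\<Sum>j\<in>A - {k}. z j * \<nu> j\<bar> \<le> (\<Sum>j\<in>A - {k}. \<bar>z j * \<nu> j\<bar>)"
    by (rule sum_abs)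
  also have "\<dots> \<le> (\<Sum>j\<in>A - {k}. z j * \<tau> j)"
    using dominated nonneg by (intro sum_mono) (simp add: abs_mult mult_left_mono)
  finally show ?thesis
    unfolding split using assms by (intro cosh_mult_cosh_antimono) auto
qed

lemma sum_sum_mult_cross_le:
  fixes a b :: "_ \<Rightarrow> _ \<Rightarrow> real"
  assumes "\<And>i m. i \<in> I \<Longrightarrow> m \<in> A i \<Longrightarrow> 0 \<le> a i m"
    and "\<And>j n. j \<in> J \<Longrightarrow> n \<in> B j \<Longrightarrow> 0 \<le> b j n"
    and "\<And>i m j n. i \<in> I \<Longrightarrow> m \<in> A i \<Longrightarrow> j \<in> J \<Longrightarrow> n \<in> B j \<Longrightarrow>
      f i m x * g j n y \<le> f i m y * g j n x"
  shows "(\<Sum>i\<in>I. \<Sum>m\<in>A i. a i m * f i m x) * (\<Sum>j\<in>J. \<Sum>n\<in>B j. b j n * g j n y)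
    \<le> (\<Sum>i\<in>I. \<Sum>m\<in>A i. a i m * f i m y) * (\<Sum>j\<in>J. \<Sum>n\<in>B j. b j n * g j n x)"
proof -
  have expand: "(\<Sum>i\<in>I. \<Sum>m\<in>A i. a i m * F i m) * (\<Sum>j\<in>J. \<Sum>n\<in>B j. b j n * G j n)
      = (\<Sum>i\<in>I. \<Sum>m\<in>A i. \<Sum>j\<in>J. \<Sum>n\<in>B j. (a i m * b j n) * (F i m * G j n))" for F G
    unfolding sum_distrib_right unfolding sum_distrib_left by (simp add: mult_ac)
  show ?thesis
    unfolding expand using assms by (intro sum_mono mult_left_mono) auto
qed

lemma divide_add_le_divide_add:
  fixes n a n' a' :: real
  assumes "0 < n + a" and "0 < n' + a'" and "n * a' \<le> n' * a"
  shows "n / (n + a) \<le> n' / (n' + a')"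
proof -
  have "n * (n' + a') \<le> n' * (n + a)"
    using assms(3) by (simp add: algebra_simps)
  then show ?thesis
    using assms(1,2) by (simp add: divide_le_eq le_divide_eq mult.commute)
qed

definition cond_mean :: "nat \<Rightarrow> (nat \<Rightarrow> nat \<Rightarrow> nat \<Rightarrow> real) \<Rightarrow> (nat \<Rightarrow> int) \<Rightarrow> nat \<Rightarrow> nat \<Rightarrow> real" where
  "cond_mean K mu h m j = real_of_int (h j) * mu (bidx K h) m j"

text \<open>The part of the marginal density of Z carried by a negation-closed set S of
  configurations, divided by the N(0, I) density (see \<open>sum_dens_eq_cosh_mix\<close>).\<close>
definition cosh_mix :: "nat \<Rightarrow> (nat \<Rightarrow> nat) \<Rightarrow> (nat \<Rightarrow> nat \<Rightarrow> nat \<Rightarrow> real) \<Rightarrow> (nat \<Rightarrow> nat \<Rightarrow> real)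
    \<Rightarrow> (nat \<Rightarrow> int) set \<Rightarrow> (nat \<Rightarrow> real) \<Rightarrow> real" where
  "cosh_mix K M mu p S z = (\<Sum>h\<in>S. \<Sum>m=1..M (bidx K h). p (bidx K h) m
     * exp (- (\<Sum>j=1..K. (cond_mean K mu h m j)\<^sup>2) / 2) * cosh (\<Sum>j=1..K. z j * cond_mean K mu h m j))"

lemma finite_configs: "finite (configs K)"
proof -
  have "configs K = {h. \<forall>k. (k \<in> {1..K} \<longrightarrow> h k \<in> {-1, 0, 1}) \<and> (k \<notin> {1..K} \<longrightarrow> h k = 0)}"
    unfolding configs_def by auto
  then show ?thesis
    using finite_set_of_finite_funs[of "{1..K}" "{-1, 0, 1 :: int}" 0] by simp
qed

lemma uminus_configs: "h \<in> configs K \<Longrightarrow> - h \<in> configs K"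
  unfolding configs_def by auto

lemma uminus_Ha_rep: "h \<in> Ha_rep K \<Longrightarrow> - h \<in> Ha_rep K"
  unfolding Ha_rep_def by (auto simp: fun_eq_iff)

lemma uminus_H0_rep:
  assumes "h \<in> H0_rep K"
  shows "- h \<in> H0_rep K"
proof -
  have "- (- h) = h"
    by (simp add: fun_eq_iff)
  then show ?thesis
    using assms uminus_configs uminus_Ha_rep[of "- h"] unfolding H0_rep_def by auto
qed

lemma Ha_rep_subset_configs: "Ha_rep K \<subseteq> configs K"
  unfolding Ha_rep_def configs_def by auto

lemma sum_pow2_rev: "(\<Sum>k=1..K. (2::nat) ^ (K - k)) = 2 ^ K - 1"
proof -
  have "(\<Sum>k=1..K. (2::nat) ^ (K - k)) = (\<Sum>i<K. 2 ^ i)"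
    by (rule sum.reindex_bij_witness[of _ "\<lambda>i. K - i" "\<lambda>k. K - k"]) auto
  then show ?thesis
    by (metis lessThan_def mask_eq_sum_exp)
qed

lemma bidx_uminus: "bidx K (- h) = bidx K h"
  unfolding bidx_def by simp

lemma bidx_le:
  assumes "h \<in> configs K"
  shows "bidx K h \<le> 2 ^ K - 1"
  unfolding bidx_def sum_pow2_rev[symmetric]
proof (intro sum_mono)
  fix k
  assume "k \<in> {1..K}"
  then have "h k \<in> {-1, 0, 1}"
    using assms unfolding configs_def by blast
  then show "2 ^ (K - k) * nat \<bar>h k\<bar> \<le> 2 ^ (K - k)"
    by auto
qed

lemma bidx_less: "h \<in> configs K \<Longrightarrow> bidx K h < 2 ^ K"
  using bidx_le[of h K] by (simp add: le_diff_conv2 Suc_le_eq)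

lemma bidx_Ha_rep: "h \<in> Ha_rep K \<Longrightarrow> bidx K h = 2 ^ K - 1"
  unfolding Ha_rep_def bidx_def sum_pow2_rev[symmetric] by (auto intro: sum.cong)

lemma cosh_sum_cond_mean_Ha_rep:
  assumes "h \<in> Ha_rep K"
  shows "cosh (\<Sum>j=1..K. z j * cond_mean K mu h m j) = cosh (\<Sum>j=1..K. z j * mu (2 ^ K - 1) m j)"
proof -
  from assms consider "\<forall>j\<in>{1..K}. cond_mean K mu h m j = mu (2 ^ K - 1) m j"
    | "\<forall>j\<in>{1..K}. cond_mean K mu h m j = - mu (2 ^ K - 1) m j"
    unfolding cond_mean_def bidx_Ha_rep[OF assms] unfolding Ha_rep_def by auto
  then show ?thesis
  proof cases
    case 1
    then show ?thesis by simp
  next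
    case 2
    then have "(\<Sum>j=1..K. z j * cond_mean K mu h m j) = - (\<Sum>j=1..K. z j * mu (2 ^ K - 1) m j)"
      by (simp add: sum_negf[symmetric])
    then show ?thesis by simp
  qed
qed

lemma dens_add_dens_uminus:
  "dens K M mu p h z + dens K M mu p (- h) z = 2 * (\<Prod>j=1..K. std_normal_density (z j))
     * (\<Sum>m=1..M (bidx K h). p (bidx K h) m * exp (- (\<Sum>j=1..K. (cond_mean K mu h m j)\<^sup>2) / 2)
         * cosh (\<Sum>j=1..K. z j * cond_mean K mu h m j))"
proof -
  have "dens K M mu p h z + dens K M mu p (- h) z = (\<Sum>m=1..M (bidx K h). p (bidx K h) m
      * ((\<Prod>j=1..K. std_normal_density (z j - cond_mean K mu h m j))
         + (\<Prod>j=1..K. std_normal_density (z j + cond_mean K mu h m j))))"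
    unfolding dens_def bidx_uminus
    by (simp add: cond_mean_def sum.distrib[symmetric] distrib_left)
  then show ?thesis
    by (simp add: prod_std_normal_density_diff_add sum_distrib_left mult_ac)
qed

lemma sum_dens_eq_cosh_mix:
  assumes "\<And>h. h \<in> S \<Longrightarrow> - h \<in> S"
  shows "(\<Sum>h\<in>S. dens K M mu p h z) = (\<Prod>j=1..K. std_normal_density (z j)) * cosh_mix K M mu p S z"
proof -
  have "(\<Sum>h\<in>S. dens K M mu p (- h) z) = (\<Sum>h\<in>S. dens K M mu p h z)"
    by (rule sum.reindex_bij_witness[of _ uminus uminus]) (auto intro: assms)
  then have "2 * (\<Sum>h\<in>S. dens K M mu p h z) = (\<Sum>h\<in>S. dens K M mu p h z + dens K M mu p (- h) z)"
    by (simp add: sum.distrib)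
  also have "\<dots> = 2 * ((\<Prod>j=1..K. std_normal_density (z j)) * cosh_mix K M mu p S z)"
    unfolding dens_add_dens_uminus cosh_mix_def by (simp add: sum_distrib_left mult_ac)
  finally show ?thesis
    by simp
qed

lemma sum_dens_configs:
  "(\<Sum>h\<in>configs K. dens K M mu p h z)
     = (\<Prod>j=1..K. std_normal_density (z j)) * (cosh_mix K M mu p (H0_rep K) z + cosh_mix K M mu p (Ha_rep K) z)"
proof -
  have "(\<Sum>h\<in>configs K. dens K M mu p h z) = (\<Sum>h\<in>H0_rep K. dens K M mu p h z) + (\<Sum>h\<in>Ha_rep K. dens K M mu p h z)"
    unfolding H0_rep_def using Ha_rep_subset_configs finite_configs by (rule sum.subset_diff)
  then show ?thesis
    by (simp add: sum_dens_eq_cosh_mix uminus_H0_rep uminus_Ha_rep distrib_left)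
qed

lemma lfdr_eq_cosh_mix:
  "lfdr K M mu p z = cosh_mix K M mu p (H0_rep K) z
     / (cosh_mix K M mu p (H0_rep K) z + cosh_mix K M mu p (Ha_rep K) z)"
proof -
  have "(\<Prod>j=1..K. std_normal_density (z j)) \<noteq> 0"
    by (simp add: normal_density_pos less_imp_neq[symmetric])
  moreover have "(\<Sum>h\<in>H0_rep K. dens K M mu p h z)
      = (\<Prod>j=1..K. std_normal_density (z j)) * cosh_mix K M mu p (H0_rep K) z"
    using uminus_H0_rep by (rule sum_dens_eq_cosh_mix)
  ultimately show ?thesis
    unfolding lfdr_def sum_dens_configs by simp
qed

lemma lfdr_uminus: "lfdr K M mu p (- z) = lfdr K M mu p z"
proof -
  have "cosh_mix K M mu p S (- z) = cosh_mix K M mu p S z" for S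
    unfolding cosh_mix_def by (simp add: sum_negf)
  then show ?thesis
    by (simp add: lfdr_eq_cosh_mix)
qed

lemma r_csmGmm_weight_nonneg:
  assumes "r_csmGmm K M mu p" and "h \<in> configs K" and "m \<in> {1..M (bidx K h)}"
  shows "0 \<le> p (bidx K h) m"
  using assms bidx_less[OF assms(2)] unfolding r_csmGmm_def csmGmm_def by blast

lemma r_csmGmm_dens_nonneg:
  assumes "r_csmGmm K M mu p" and "h \<in> configs K"
  shows "0 \<le> dens K M mu p h z"
  unfolding dens_def using r_csmGmm_weight_nonneg[OF assms]
  by (intro sum_nonneg mult_nonneg_nonneg prod_nonneg) auto

lemma r_csmGmm_marginal_density_pos:
  assumes "r_csmGmm K M mu p"
  shows "0 < (\<Sum>h\<in>configs K. dens K M mu p h z)"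
proof -
  have "(\<Sum>h\<in>configs K. \<Sum>m=1..M (bidx K h). p (bidx K h) m) = 1"
    using assms unfolding r_csmGmm_def csmGmm_def by simp
  then obtain h m where h: "h \<in> configs K" and m: "m \<in> {1..M (bidx K h)}"
    and "p (bidx K h) m \<noteq> 0"
    by (metis (no_types, lifting) sum.neutral zero_neq_one)
  then have "0 < p (bidx K h) m"
    using r_csmGmm_weight_nonneg[OF assms h m] by simp
  then have "0 < p (bidx K h) m
      * (\<Prod>k=1..K. std_normal_density (z k - real_of_int (h k) * mu (bidx K h) m k))"
    by (simp add: prod_pos normal_density_pos)
  also have "\<dots> \<le> dens K M mu p h z"
    unfolding dens_def using m r_csmGmm_weight_nonneg[OF assms h]
    by (intro member_le_sum mult_nonneg_nonneg prod_nonneg) auto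
  also have "\<dots> \<le> (\<Sum>h\<in>configs K. dens K M mu p h z)"
    using h r_csmGmm_dens_nonneg[OF assms] finite_configs by (intro member_le_sum) auto
  finally show ?thesis .
qed

lemma r_csmGmm_cosh_mix_pos:
  assumes "r_csmGmm K M mu p"
  shows "0 < cosh_mix K M mu p (H0_rep K) z + cosh_mix K M mu p (Ha_rep K) z"
proof -
  have "0 < (\<Prod>j=1..K. std_normal_density (z j))"
    by (simp add: prod_pos normal_density_pos)
  then show ?thesis
    using r_csmGmm_marginal_density_pos[OF assms, of z] unfolding sum_dens_configs
    by (metis zero_less_mult_pos)
qed

lemma r_csmGmm_cond_mean_dominated:
  assumes R: "r_csmGmm K M mu p" and h: "h \<in> configs K" and m: "m \<in> {1..M (bidx K h)}"
    and j: "j \<in> {1..K}"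
  shows "\<bar>cond_mean K mu h m j\<bar> \<le> mu (2 ^ K - 1) 1 j"
proof -
  let ?b = "bidx K h"
  have csm: "csmGmm K M mu p" and M_full: "M (2 ^ K - 1) = 1"
    using R unfolding r_csmGmm_def by auto
  have mu_nonneg: "0 \<le> mu ?b m j"
    using csm bidx_less[OF h] m j unfolding csmGmm_def by (metis less_eq_real_def)
  have mu_le: "mu ?b m j \<le> mu (2 ^ K - 1) 1 j"
  proof (cases "?b = 2 ^ K - 1")
    case True
    \<comment> \<open>here \<open>M (2 ^ K - 1) = 1\<close> is essential: mixed-sign null configurations share the
      alternative's class and hence its mean magnitudes\<close>
    then have "m = 1"
      using m M_full by auto
    then show ?thesis
      using True by simp
  next
    case False
    then have "?b < 2 ^ K - 1"
      using bidx_le[OF h] by simp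
    then show ?thesis
      using csm m j M_full unfolding csmGmm_def by auto
  qed
  have "h j \<in> {-1, 0, 1}"
    using h j unfolding configs_def by blast
  then have "\<bar>real_of_int (h j)\<bar> * mu ?b m j \<le> mu ?b m j"
    using mu_nonneg by (intro mult_left_le_one_le) auto
  then show ?thesis
    unfolding cond_mean_def abs_mult using mu_nonneg mu_le by simp
qed

lemma r_csmGmm_cosh_component_antimono:
  assumes R: "r_csmGmm K M mu p"
    and h: "h \<in> configs K" and m: "m \<in> {1..M (bidx K h)}"
    and h': "h' \<in> Ha_rep K" and m': "m' \<in> {1..M (bidx K h')}"
    and "k \<in> {1..K}" and "\<forall>k'\<in>{1..K}. k' \<noteq> k \<longrightarrow> 0 < z k'"
    and "0 \<le> s" and "s \<le> t"
  shows "cosh (\<Sum>j=1..K. (z(k := t)) j * cond_mean K mu h m j)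
      * cosh (\<Sum>j=1..K. (z(k := s)) j * cond_mean K mu h' m' j)
    \<le> cosh (\<Sum>j=1..K. (z(k := s)) j * cond_mean K mu h m j)
      * cosh (\<Sum>j=1..K. (z(k := t)) j * cond_mean K mu h' m' j)"
proof -
  have "m' = 1"
    using m' R bidx_Ha_rep[OF h'] unfolding r_csmGmm_def by simp
  then show ?thesis
    unfolding cosh_sum_cond_mean_Ha_rep[OF h']
    using assms r_csmGmm_cond_mean_dominated[OF R h m]
    by (intro cosh_sum_fun_upd_antimono) (auto simp: less_imp_le)
qed

lemma r_csmGmm_lfdr_antimono:
  assumes R: "r_csmGmm K M mu p" and k: "k \<in> {1..K}"
    and pos: "\<forall>k'\<in>{1..K}. k' \<noteq> k \<longrightarrow> 0 < z k'" and "0 \<le> s" and "s \<le> t"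
  shows "lfdr K M mu p (z(k := t)) \<le> lfdr K M mu p (z(k := s))"
proof -
  have weight_nonneg: "0 \<le> p (bidx K h) m * exp (- (\<Sum>j=1..K. (cond_mean K mu h m j)\<^sup>2) / 2)"
    if "h \<in> configs K" and "m \<in> {1..M (bidx K h)}" for h m
    using r_csmGmm_weight_nonneg[OF R that] by simp
  have "cosh_mix K M mu p (H0_rep K) (z(k := t)) * cosh_mix K M mu p (Ha_rep K) (z(k := s))
      \<le> cosh_mix K M mu p (H0_rep K) (z(k := s)) * cosh_mix K M mu p (Ha_rep K) (z(k := t))"
    unfolding cosh_mix_def
    using weight_nonneg Ha_rep_subset_configs r_csmGmm_cosh_component_antimono[OF R _ _ _ _ k pos assms(4,5)]
    by (intro sum_sum_mult_cross_le[where f = "\<lambda>h m w. cosh (\<Sum>j=1..K. w j * cond_mean K mu h m j)"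
          and g = "\<lambda>h m w. cosh (\<Sum>j=1..K. w j * cond_mean K mu h m j)"])
      (auto simp: H0_rep_def)
  then show ?thesis
    unfolding lfdr_eq_cosh_mix by (intro divide_add_le_divide_add r_csmGmm_cosh_mix_pos[OF R])
qed

theorem theorem3:
  fixes K :: nat and M :: "nat \<Rightarrow> nat" and mu :: "nat \<Rightarrow> nat \<Rightarrow> nat \<Rightarrow> real"
    and p :: "nat \<Rightarrow> nat \<Rightarrow> real"
  assumes "K \<ge> 2"
    and "r_csmGmm K M mu p"
  shows "\<forall>k\<in>{1..K}. \<forall>z :: nat \<Rightarrow> real. \<forall>s t :: real.
           ((\<forall>k'\<in>{1..K}. k' \<noteq> k \<longrightarrow> z k' > 0) \<and> 0 < s \<and> s \<le> t
              \<longrightarrow> lfdr K M mu p (z(k := t)) \<le> lfdr K M mu p (z(k := s))) \<and>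
           ((\<forall>k'\<in>{1..K}. k' \<noteq> k \<longrightarrow> z k' < 0) \<and> s \<le> t \<and> t < 0
              \<longrightarrow> lfdr K M mu p (z(k := s)) \<le> lfdr K M mu p (z(k := t)))"
proof (intro ballI allI conjI impI)
  fix k z s t
  assume k: "k \<in> {1..K}"
  show "lfdr K M mu p (z(k := t)) \<le> lfdr K M mu p (z(k := s))"
    if "(\<forall>k'\<in>{1..K}. k' \<noteq> k \<longrightarrow> z k' > 0) \<and> 0 < s \<and> s \<le> t"
    using r_csmGmm_lfdr_antimono[OF assms(2) k] that by simp
  show "lfdr K M mu p (z(k := s)) \<le> lfdr K M mu p (z(k := t))"
    if neg: "(\<forall>k'\<in>{1..K}. k' \<noteq> k \<longrightarrow> z k' < 0) \<and> s \<le> t \<and> t < 0"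
  proof -
    have "lfdr K M mu p ((- z)(k := - s)) \<le> lfdr K M mu p ((- z)(k := - t))"
      using neg by (intro r_csmGmm_lfdr_antimono[OF assms(2) k]) auto
    moreover have "(- z)(k := - u) = - (z(k := u))" for u
      by (simp add: fun_eq_iff)
    ultimately show ?thesis
      by (simp add: lfdr_uminus)
  qed
qed

end
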